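(* Let $G$ be a unicyclic graph of order $n$ with girth $g$ (so $3\le g\le n$). Then $$SO(G)\le 2\sqrt{(n-g+2)^2+4}+(n-g)\sqrt{(n-g+2)^2+1}+2\sqrt2\,(g-2),$$ with equality if and only if $G$ is isomorphic to the graph $U_{n,g}$ obtained by attaching $n-g$ pendent edges to one vertex of the cycle $C_g$.
   Context: For a graph $G$, $d_G(w)$ denotes the degree of vertex $w$, and the Sombor index is $SO(G)=\sum_{ab\in E(G)}\sqrt{d_G(a)^2+d_G(b)^2}$. A unicyclic graph is a connected graph with exactly one cycle; its girth is the length of that cycle. $C_g$ is the cycle on $g$ vertices. *)

theory Defs
  imports Complex_Main
begin

definition simple_graph :: "'a set \<Rightarrow> 'a set set \<Rightarrow> bool" where
  "simple_graph V E \<longleftrightarrow> finite V \<and> (\<forall>e\<in>E. e \<subseteq> V \<and> card e = 2)"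

definition adj :: "'a set set \<Rightarrow> 'a \<Rightarrow> 'a \<Rightarrow> bool" where
  "adj E u v \<longleftrightarrow> {u, v} \<in> E"

definition connected_graph :: "'a set \<Rightarrow> 'a set set \<Rightarrow> bool" where
  "connected_graph V E \<longleftrightarrow>
     (\<forall>u\<in>V. \<forall>v\<in>V. (u, v) \<in> {(x, y). adj E x y}\<^sup>*)"

definition degree :: "'a set set \<Rightarrow> 'a \<Rightarrow> nat" where
  "degree E v = card {e \<in> E. v \<in> e}"

definition sombor :: "'a set set \<Rightarrow> real" where
  "sombor E = (\<Sum>e\<in>E. sqrt (\<Sum>v\<in>e. (real (degree E v))\<^sup>2))"

definition cycle_edges :: "'a list \<Rightarrow> 'a set set" where
  "cycle_edges vs = {{vs ! i, vs ! ((i + 1) mod length vs)} | i. i < length vs}"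

definition is_cycle :: "'a set \<Rightarrow> 'a set set \<Rightarrow> 'a list \<Rightarrow> bool" where
  "is_cycle V E vs \<longleftrightarrow> distinct vs \<and> 3 \<le> length vs \<and> set vs \<subseteq> V \<and> cycle_edges vs \<subseteq> E"

definition cycles :: "'a set \<Rightarrow> 'a set set \<Rightarrow> 'a set set set" where
  "cycles V E = {cycle_edges vs | vs. is_cycle V E vs}"

definition unicyclic :: "'a set \<Rightarrow> 'a set set \<Rightarrow> bool" where
  "unicyclic V E \<longleftrightarrow> simple_graph V E \<and> connected_graph V E \<and> (\<exists>C. cycles V E = {C})"

definition girth :: "'a set \<Rightarrow> 'a set set \<Rightarrow> nat" where
  "girth V E = (LEAST k. \<exists>vs. is_cycle V E vs \<and> length vs = k)"

definition U_vertices :: "nat \<Rightarrow> nat set" where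
  "U_vertices n = {0..<n}"

definition U_edges :: "nat \<Rightarrow> nat \<Rightarrow> nat set set" where
  "U_edges n g = {{i, (i + 1) mod g} | i. i < g} \<union> {{0, j} | j. g \<le> j \<and> j < n}"

definition graph_iso :: "'a set \<Rightarrow> 'a set set \<Rightarrow> 'b set \<Rightarrow> 'b set set \<Rightarrow> bool" where
  "graph_iso V E W F \<longleftrightarrow> (\<exists>f. bij_betw f V W \<and>
      (\<forall>u\<in>V. \<forall>v\<in>V. {u, v} \<in> E \<longleftrightarrow> {f u, f v} \<in> F) \<and> (\<forall>e\<in>E. e \<subseteq> V))"

end

theory Submission
  imports Defs
begin

(*
  Split the Sombor term of every edge between its endpoints. With D = n - g + 2, the largest
  degree possible in a unicyclic graph of girth g, give a leaf the weight
  sqrt (D\<^sup>2 + 1) - sqrt (D\<^sup>2 + 4) + sqrt 2 and a vertex of degree d \<ge> 2 the weight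
  sqrt (d\<^sup>2 + 4) - sqrt 2. Then sqrt (a\<^sup>2 + b\<^sup>2) \<le> w a + w b on every edge, so
  SO(G) \<le> \<Sum>v. d v * w (d v). On vertices of degree d \<ge> 2 the function d * w d is convex, hence
  superadditive in the excess d - 2; as a unicyclic graph has no more edges than vertices, the
  total excess is at most the number L of leaves, and L \<le> n - g since no leaf lies on the cycle.
  The resulting bound increases with L and equals SO(U_{n,g}) at L = n - g.
  In the equality case L = n - g, so the vertices off the cycle are exactly the leaves, and every
  leaf edge is tight, which forces the other end to have degree D; at most one vertex does.
*)

section \<open>Cycles as lists\<close>

lemma cycle_edges_conv_image:
  "cycle_edges vs = (\<lambda>i. {vs ! i, vs ! ((i + 1) mod length vs)}) ` {..<length vs}"
  by (auto simp: cycle_edges_def)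

lemma cycle_edges_subset_set: "e \<in> cycle_edges vs \<Longrightarrow> e \<subseteq> set vs"
  by (auto simp: cycle_edges_def intro!: nth_mem mod_less_divisor)

lemma cycle_edges_map: "(`) f ` cycle_edges vs = cycle_edges (map f vs)"
  unfolding cycle_edges_conv_image image_image length_map
proof (rule image_cong[OF refl])
  fix i assume "i \<in> {..<length vs}"
  then have "(i + 1) mod length vs < length vs" by (intro mod_less_divisor) auto
  then show "(`) f {vs ! i, vs ! ((i + 1) mod length vs)}
      = {map f vs ! i, map f vs ! ((i + 1) mod length vs)}"
    using \<open>i \<in> {..<length vs}\<close> by simp
qed

lemma inj_on_cycle_edge:
  assumes "distinct vs" "3 \<le> length vs"
  shows "inj_on (\<lambda>i. {vs ! i, vs ! ((i + 1) mod length vs)}) {..<length vs}"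
proof (rule inj_onI)
  define l where "l = length vs"
  fix i p assume "i \<in> {..<length vs}" "p \<in> {..<length vs}"
    and eq: "{vs ! i, vs ! ((i + 1) mod length vs)} = {vs ! p, vs ! ((p + 1) mod length vs)}"
  then have i: "i < l" and p: "p < l" and l0: "0 < l" by (auto simp: l_def)
  have idx: "vs ! a = vs ! b \<longleftrightarrow> a = b" if "a < l" "b < l" for a b
    using assms(1) that nth_eq_iff_index_eq l_def by blast
  show "i = p"
  proof (rule ccontr)
    assume "i \<noteq> p"
    then have "i = (p + 1) mod l" "p = (i + 1) mod l"
      using eq idx[OF i p] idx[OF i] idx[OF _ p] i p l0 unfolding l_def[symmetric] doubleton_eq_iff
      by auto
    then have "(p + 2) mod l = p mod l"
      by (metis add_2_eq_Suc' mod_Suc_eq p mod_less Suc_eq_plus1)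
    then have "l dvd 2" using mod_eq_dvd_iff_nat[of p "p + 2" l] by simp
    then show False using assms(2) l_def by (auto dest: dvd_imp_le)
  qed
qed

lemma card_cycle_edges:
  assumes "distinct vs" "3 \<le> length vs"
  shows "card (cycle_edges vs) = length vs"
  unfolding cycle_edges_conv_image using card_image[OF inj_on_cycle_edge[OF assms]] by simp

lemma image_add_mod_lessThan:
  fixes l :: nat
  assumes "0 < l"
  shows "(\<lambda>i. (j + i) mod l) ` {..<l} = {..<l}"
proof
  show "(\<lambda>i. (j + i) mod l) ` {..<l} \<subseteq> {..<l}" using assms by auto
  show "{..<l} \<subseteq> (\<lambda>i. (j + i) mod l) ` {..<l}"
  proof
    fix p assume p: "p \<in> {..<l}"
    have "j mod l < l" using assms by simp
    have "(j + (p + (l - j mod l)) mod l) mod l = (j + (p + (l - j mod l))) mod l"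
      by (rule mod_add_right_eq)
    also have "j + (p + (l - j mod l)) = p + (j div l + 1) * l"
      using div_mult_mod_eq[of j l] \<open>j mod l < l\<close>
      by (simp only: distrib_right mult_1_left)
    also have "(p + (j div l + 1) * l) mod l = p" using p by (subst mod_mult_self1) simp
    finally have "(j + (p + (l - j mod l)) mod l) mod l = p" .
    then show "p \<in> (\<lambda>i. (j + i) mod l) ` {..<l}"
      by (rule image_eqI[OF sym]) (use assms in simp)
  qed
qed

lemma cycle_edges_rotate: "cycle_edges (rotate j vs) = cycle_edges vs"
proof (cases "vs = []")
  case False
  define l where "l = length vs"
  define e where "e i = {vs ! i, vs ! ((i + 1) mod l)}" for i
  have l: "0 < l" using False by (simp add: l_def)
  have "cycle_edges (rotate j vs) = (\<lambda>i. e ((j + i) mod l)) ` {..<l}"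
    unfolding cycle_edges_conv_image length_rotate l_def[symmetric]
  proof (rule image_cong[OF refl])
    fix i assume "i \<in> {..<l}"
    moreover have "(i + 1) mod l < l" using l by simp
    moreover have "(j + (i + 1) mod l) mod l = ((j + i) mod l + 1) mod l"
      by (metis mod_add_right_eq mod_add_left_eq add.assoc)
    ultimately show "{rotate j vs ! i, rotate j vs ! ((i + 1) mod l)} = e ((j + i) mod l)"
      by (simp add: e_def nth_rotate l_def)
  qed
  also have "\<dots> = e ` {..<l}"
    using image_image[of e "\<lambda>i. (j + i) mod l" "{..<l}"] image_add_mod_lessThan[OF l] by simp
  finally show ?thesis by (simp add: cycle_edges_conv_image e_def l_def)
qed (simp add: cycle_edges_def)

lemma finite_edges: "finite V \<Longrightarrow> \<forall>e\<in>E. e \<subseteq> V \<Longrightarrow> finite E"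
  by (meson Pow_iff finite_Pow_iff finite_subset subsetI)

section \<open>Simple graphs\<close>

lemma simple_graph_finite_edges: "simple_graph V E \<Longrightarrow> finite E"
  unfolding simple_graph_def by (auto intro: finite_edges)

lemma simple_graph_edgeE:
  assumes "simple_graph V E" "e \<in> E"
  obtains a b where "e = {a, b}" "a \<noteq> b" "a \<in> V" "b \<in> V"
  using assms unfolding simple_graph_def by (metis card_2_iff insert_subset)

lemma edge_sum_eq_degree_sum:
  fixes f :: "'a \<Rightarrow> real"
  assumes "finite V" "\<forall>e\<in>E. e \<subseteq> V"
  shows "(\<Sum>e\<in>E. \<Sum>v\<in>e. f v) = (\<Sum>v\<in>V. real (degree E v) * f v)"
proof -
  have "finite E" using assms by (rule finite_edges)
  have "(\<Sum>e\<in>E. \<Sum>v\<in>e. f v) = (\<Sum>e\<in>E. \<Sum>v\<in>V. if v \<in> e then f v else 0)"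
  proof (rule sum.cong[OF refl])
    fix e assume "e \<in> E"
    then have "{v \<in> V. v \<in> e} = e" using assms(2) by auto
    then show "(\<Sum>v\<in>e. f v) = (\<Sum>v\<in>V. if v \<in> e then f v else 0)"
      using sum.inter_filter[OF assms(1), of f "\<lambda>v. v \<in> e"] by simp
  qed
  also have "\<dots> = (\<Sum>v\<in>V. \<Sum>e\<in>E. if v \<in> e then f v else 0)" by (rule sum.swap)
  also have "\<dots> = (\<Sum>v\<in>V. real (degree E v) * f v)"
    using \<open>finite E\<close> by (simp add: sum.If_cases degree_def Int_def)
  finally show ?thesis .
qed

lemma handshake:
  assumes "simple_graph V E"
  shows "(\<Sum>v\<in>V. degree E v) = 2 * card E"
proof -
  have "real (\<Sum>v\<in>V. degree E v) = (\<Sum>e\<in>E. \<Sum>v\<in>e. 1)"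
    using assms edge_sum_eq_degree_sum[of V E "\<lambda>_. 1"] by (simp add: simple_graph_def)
  also have "\<dots> = real (2 * card E)" using assms by (simp add: simple_graph_def)
  finally show ?thesis by linarith
qed

definition sombor_term :: "'a set set \<Rightarrow> 'a set \<Rightarrow> real" where
  "sombor_term E e = sqrt (\<Sum>v\<in>e. (real (degree E v))\<^sup>2)"

lemma sombor_eq_sum_terms: "sombor E = (\<Sum>e\<in>E. sombor_term E e)"
  by (simp add: sombor_def sombor_term_def)

lemma sombor_term_pair:
  "a \<noteq> b \<Longrightarrow> sombor_term E {a, b} = sqrt ((real (degree E a))\<^sup>2 + (real (degree E b))\<^sup>2)"
  by (simp add: sombor_term_def)

lemma simple_graph_cycle_edges:
  assumes "distinct vs" "3 \<le> length vs"
  shows "simple_graph (set vs) (cycle_edges vs)"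
  unfolding simple_graph_def
proof (intro conjI ballI)
  fix e assume e: "e \<in> cycle_edges vs"
  then show "e \<subseteq> set vs" by (rule cycle_edges_subset_set)
  obtain i where i: "i < length vs" and "e = {vs ! i, vs ! ((i + 1) mod length vs)}"
    using e unfolding cycle_edges_def by blast
  moreover have "(i + 1) mod length vs \<noteq> i"
    using i assms(2) by (cases "i + 1 = length vs") auto
  moreover have "(i + 1) mod length vs < length vs" using i by (intro mod_less_divisor) auto
  ultimately show "card e = 2"
    using assms(1) i by (simp add: nth_eq_iff_index_eq)
qed simp

lemma two_le_card_cycle_edges_containing:
  assumes "distinct vs" "3 \<le> length vs" "v \<in> set vs"
  shows "2 \<le> card {e \<in> cycle_edges vs. v \<in> e}"
proof -
  define l where "l = length vs"
  define edge where "edge i = {vs ! i, vs ! ((i + 1) mod l)}" for i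
  have l: "3 \<le> l" using assms(2) by (simp add: l_def)
  obtain i where i: "i < l" and v: "v = vs ! i" using assms(3) by (metis in_set_conv_nth l_def)
  define p where "p = (i + (l - 1)) mod l"
  have p: "p < l" using l by (simp add: p_def)
  have "(p + 1) mod l = (i + (l - 1) + 1) mod l" unfolding p_def by (rule mod_add_left_eq)
  also have "i + (l - 1) + 1 = i + l" using l by simp
  finally have succ_p: "(p + 1) mod l = i" using i by simp
  have "p \<noteq> i"
  proof
    assume "p = i"
    then have "l dvd l - 1"
      using mod_eq_dvd_iff_nat[of i "i + (l - 1)" l] i by (simp add: p_def)
    then show False using l by (auto dest: dvd_imp_le)
  qed
  then have "edge p \<noteq> edge i"
    using inj_on_cycle_edge[OF assms(1,2)] p i unfolding edge_def l_def inj_on_def by blast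
  have "{edge p, edge i} \<subseteq> {e \<in> cycle_edges vs. v \<in> e}"
    using p i succ_p v unfolding edge_def cycle_edges_def l_def by auto
  moreover have "finite {e \<in> cycle_edges vs. v \<in> e}" by (simp add: cycle_edges_conv_image)
  ultimately have "card {edge p, edge i} \<le> card {e \<in> cycle_edges vs. v \<in> e}"
    by (rule card_mono[rotated])
  then show ?thesis using \<open>edge p \<noteq> edge i\<close> by simp
qed

(* Every cycle vertex lies on at least two cycle edges, and the degrees sum to twice the length. *)
lemma card_cycle_edges_containing:
  assumes "distinct vs" "3 \<le> length vs" "v \<in> set vs"
  shows "card {e \<in> cycle_edges vs. v \<in> e} = 2"
proof (rule ccontr)
  assume "card {e \<in> cycle_edges vs. v \<in> e} \<noteq> 2"
  then have "2 < degree (cycle_edges vs) v"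
    using two_le_card_cycle_edges_containing[OF assms] by (simp add: degree_def)
  moreover have "2 \<le> degree (cycle_edges vs) w" if "w \<in> set vs" for w
    using two_le_card_cycle_edges_containing[OF assms(1,2) that] by (simp add: degree_def)
  ultimately have "(\<Sum>w\<in>set vs. 2) < (\<Sum>w\<in>set vs. degree (cycle_edges vs) w)"
    using assms(3) by (intro sum_strict_mono_ex1) auto
  also have "\<dots> = 2 * length vs"
    using handshake[OF simple_graph_cycle_edges[OF assms(1,2)]] card_cycle_edges[OF assms(1,2)] by simp
  finally show False using distinct_card[OF assms(1)] by simp
qed

lemma is_cycle_degree_ge_2:
  assumes "is_cycle V E vs" "finite E" "v \<in> set vs"
  shows "2 \<le> degree E v"
proof -
  have "{e \<in> cycle_edges vs. v \<in> e} \<subseteq> {e \<in> E. v \<in> e}"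
    using assms(1) unfolding is_cycle_def by blast
  then have "card {e \<in> cycle_edges vs. v \<in> e} \<le> degree E v"
    unfolding degree_def using assms(2) by (intro card_mono) auto
  then show ?thesis using assms card_cycle_edges_containing unfolding is_cycle_def by fastforce
qed

lemma simple_graph_edge_at:
  assumes "simple_graph V E" "e \<in> E" "x \<in> e"
  obtains y where "e = {x, y}" "y \<noteq> x" "y \<in> V"
proof -
  obtain a b where ab: "e = {a, b}" "a \<noteq> b" "a \<in> V" "b \<in> V"
    by (rule simple_graph_edgeE[OF assms(1,2)])
  show thesis
  proof (cases "x = a")
    case True
    then show thesis using that[of b] ab by simp
  next
    case False
    then have "x = b" using assms(3) ab by simp
    then show thesis using that[of a] ab by (simp add: insert_commute)
  qed
qed

lemma degree_ge_2_neighbour: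
  assumes "simple_graph V E" "2 \<le> degree E x"
  obtains y where "{x, y} \<in> E" "y \<noteq> x" "y \<in> V" "y \<noteq> p"
proof -
  define S where "S = {e \<in> E. x \<in> e}"
  have fin: "finite S" using simple_graph_finite_edges[OF assms(1)] by (simp add: S_def)
  have card: "2 \<le> card S" using assms(2) by (simp add: S_def degree_def)
  then obtain e1 where e1: "e1 \<in> S" by fastforce
  have "card (S - {e1}) \<noteq> 0" using fin e1 card by simp
  then have "S - {e1} \<noteq> {}" by (metis card.empty)
  then obtain e2 where e2: "e2 \<in> S" "e2 \<noteq> e1" by blast
  obtain y1 where y1: "e1 = {x, y1}" "y1 \<noteq> x" "y1 \<in> V"
    using simple_graph_edge_at[OF assms(1)] e1 by (auto simp: S_def)
  obtain y2 where y2: "e2 = {x, y2}" "y2 \<noteq> x" "y2 \<in> V"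
    using simple_graph_edge_at[OF assms(1)] e2 by (auto simp: S_def)
  have "y1 \<noteq> y2" using y1 y2 e2(2) by auto
  moreover have "{x, y1} \<in> E" "{x, y2} \<in> E" using e1 e2 y1 y2 by (auto simp: S_def)
  ultimately show ?thesis using that y1 y2 by (cases "y1 = p") auto
qed

definition is_path :: "'a set \<Rightarrow> 'a set set \<Rightarrow> 'a list \<Rightarrow> bool" where
  "is_path V E ps \<longleftrightarrow>
     distinct ps \<and> set ps \<subseteq> V \<and> (\<forall>i. Suc i < length ps \<longrightarrow> {ps ! i, ps ! Suc i} \<in> E)"

lemma is_path_snoc:
  assumes "is_path V E ps" "ps \<noteq> []" "y \<in> V" "y \<notin> set ps" "{last ps, y} \<in> E"
  shows "is_path V E (ps @ [y])"
  using assms unfolding is_path_def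
  by (auto simp: nth_append last_conv_nth less_Suc_eq) (metis One_nat_def diff_Suc_1)

lemma is_path_close_cycle:
  assumes "is_path V E ps" "j + 3 \<le> length ps" "{last ps, ps ! j} \<in> E"
  shows "is_cycle V E (drop j ps)"
  unfolding is_cycle_def
proof (intro conjI)
  show "distinct (drop j ps)" "set (drop j ps) \<subseteq> V"
    using assms(1) set_drop_subset unfolding is_path_def by fastforce+
  show "3 \<le> length (drop j ps)" using assms(2) by simp
  show "cycle_edges (drop j ps) \<subseteq> E"
  proof
    fix e assume "e \<in> cycle_edges (drop j ps)"
    then obtain i where i: "i < length ps - j"
      and e: "e = {ps ! (j + i), drop j ps ! ((i + 1) mod (length ps - j))}"
      unfolding cycle_edges_def using assms(2) by auto
    show "e \<in> E"
    proof (cases "i + 1 < length ps - j")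
      case True
      then show ?thesis using e assms(1) unfolding is_path_def by (auto simp: add.commute)
    next
      case False
      then have "i + 1 = length ps - j" using i by simp
      then have "j + i = length ps - 1" by simp
      then have "last ps = ps ! (j + i)" using assms(2) by (subst last_conv_nth) auto
      then have "e = {last ps, ps ! j}"
        using e \<open>i + 1 = length ps - j\<close> by (simp add: insert_commute)
      then show ?thesis using assms(3) by simp
    qed
  qed
qed

(* The end of a longest path has a neighbour other than its predecessor; it cannot extend the
   path, so it lies on it and closes a cycle. *)
lemma min_degree_two_imp_cycle:
  assumes sg: "simple_graph V E" and "V \<noteq> {}" and deg: "\<forall>v\<in>V. 2 \<le> degree E v"
  obtains vs where "is_cycle V E vs"
proof -
  obtain v where "v \<in> V" using assms(2) by blast
  then have path_v: "is_path V E [v]" by (simp add: is_path_def)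
  have "length ps \<le> card V" if "is_path V E ps" for ps
    using that sg card_mono[of V "set ps"] distinct_card[of ps]
    unfolding is_path_def simple_graph_def by simp
  then have "\<exists>k. (\<exists>ps. is_path V E ps \<and> length ps = k)
      \<and> (\<forall>k'. (\<exists>ps. is_path V E ps \<and> length ps = k') \<longrightarrow> k' \<le> k)"
    using path_v by (intro Nat.ex_has_greatest_nat[where k = 1 and b = "card V"]) auto
  then obtain ps where ps: "is_path V E ps"
    and longest: "\<And>qs. is_path V E qs \<Longrightarrow> length qs \<le> length ps" by blast
  define l where "l = length ps"
  have "ps \<noteq> []" using longest[OF path_v] by auto
  then have last: "last ps = ps ! (l - 1)" and "last ps \<in> V"
    using ps by (auto simp: l_def last_conv_nth is_path_def)
  then obtain y where y: "{last ps, y} \<in> E" "y \<noteq> last ps" "y \<in> V" "y \<noteq> ps ! (l - 2)"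
    using degree_ge_2_neighbour[OF sg, where p = "ps ! (l - 2)"] deg by blast
  show thesis
  proof (cases "y \<in> set ps")
    case True
    then obtain j where j: "j < l" "ps ! j = y" by (metis in_set_conv_nth l_def)
    moreover have "j \<noteq> l - 1" "j \<noteq> l - 2" using j y(2,4) last by auto
    ultimately have "j + 3 \<le> l" by linarith
    then show thesis using that is_path_close_cycle[OF ps] j y(1) l_def by blast
  next
    case False
    then have "length (ps @ [y]) \<le> length ps"
      using longest is_path_snoc[OF ps \<open>ps \<noteq> []\<close> y(3) _ y(1)] by blast
    then show thesis by simp
  qed
qed

lemma acyclic_card_edges_less:
  assumes "simple_graph V E" "V \<noteq> {}" "\<nexists>vs. is_cycle V E vs"
  shows "card E < card V"
  using assms
proof (induction "card V" arbitrary: V E rule: less_induct)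
  case less
  have finV: "finite V" using less.prems(1) by (simp add: simple_graph_def)
  have "\<exists>v\<in>V. degree E v \<le> 1"
  proof (rule ccontr)
    assume "\<not> (\<exists>v\<in>V. degree E v \<le> 1)"
    then have "\<forall>v\<in>V. 2 \<le> degree E v" by auto
    then obtain vs where "is_cycle V E vs" using min_degree_two_imp_cycle less.prems(1,2) by blast
    then show False using less.prems(3) by blast
  qed
  then obtain v where v: "v \<in> V" and "degree E v \<le> 1" by blast
  define E' where "E' = {e \<in> E. v \<notin> e}"
  have "E = E' \<union> {e \<in> E. v \<in> e}" unfolding E'_def by blast
  then have card_E: "card E \<le> card E' + 1"
    using card_Un_le[of E' "{e \<in> E. v \<in> e}"] \<open>degree E v \<le> 1\<close> unfolding degree_def by simp
  show ?case
  proof (cases "V = {v}")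
    case True
    have "E = {}"
    proof (rule equals0I)
      fix e assume "e \<in> E"
      then have "e \<subseteq> {v}" "card e = 2" using less.prems(1) True by (auto simp: simple_graph_def)
      then show False using card_mono[of "{v}" e] by simp
    qed
    then show ?thesis using True by simp
  next
    case False
    have "simple_graph (V - {v}) E'" using less.prems(1) unfolding simple_graph_def E'_def by auto
    moreover have "\<nexists>vs. is_cycle (V - {v}) E' vs"
      using less.prems(3) unfolding is_cycle_def E'_def by blast
    moreover have "card (V - {v}) < card V" using finV v by (rule card_Diff1_less)
    ultimately have "card E' < card (V - {v})" using less.hyps False v by blast
    then show ?thesis using card_E finV v by simp
  qed
qed

lemma connected_degree_pos:
  assumes "connected_graph V E" "finite E" "u \<in> V" "v \<in> V" "u \<noteq> v"
  shows "1 \<le> degree E v"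
proof -
  have "(v, u) \<in> {(x, y). adj E x y}\<^sup>*" using assms unfolding connected_graph_def by blast
  then obtain x where "{v, x} \<in> E" using assms(5) unfolding adj_def
    by (cases rule: converse_rtranclE) auto
  then have "{e \<in> E. v \<in> e} \<noteq> {}" by blast
  then show ?thesis using assms(2) unfolding degree_def by (simp add: Suc_leI card_gt_0_iff)
qed

section \<open>Isomorphisms\<close>

lemma inj_on_image_edges:
  assumes "inj_on f V" "\<forall>e\<in>E. e \<subseteq> V"
  shows "inj_on ((`) f) E"
proof (rule inj_onI)
  fix a b assume "a \<in> E" "b \<in> E" "f ` a = f ` b"
  then show "a = b" using inj_on_image_eq_iff[OF assms(1)] assms(2) by blast
qed

lemma degree_image:
  assumes "inj_on f V" "\<forall>e\<in>E. e \<subseteq> V" "v \<in> V"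
  shows "degree ((`) f ` E) (f v) = degree E v"
proof -
  have "{e' \<in> (`) f ` E. f v \<in> e'} = (`) f ` {e \<in> E. v \<in> e}"
  proof (intro equalityI subsetI)
    fix e' assume "e' \<in> {e' \<in> (`) f ` E. f v \<in> e'}"
    then obtain e where "e \<in> E" "e' = f ` e" "f v \<in> f ` e" by blast
    moreover have "v \<in> e" using inj_on_image_mem_iff[OF assms(1,3)] assms(2) calculation by blast
    ultimately show "e' \<in> (`) f ` {e \<in> E. v \<in> e}" by blast
  qed blast
  then show ?thesis
    unfolding degree_def using inj_on_image_edges[OF assms(1,2)]
    by (simp add: card_image inj_on_subset)
qed

lemma sombor_image:
  assumes "inj_on f V" "\<forall>e\<in>E. e \<subseteq> V"
  shows "sombor ((`) f ` E) = sombor E"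
proof -
  have "(\<Sum>x\<in>f ` e. (real (degree ((`) f ` E) x))\<^sup>2) = (\<Sum>v\<in>e. (real (degree E v))\<^sup>2)"
    if e: "e \<in> E" for e
  proof -
    have "e \<subseteq> V" using e assms(2) by blast
    then have "inj_on f e" using assms(1) by (rule inj_on_subset[rotated])
    then show ?thesis
      using degree_image[OF assms] \<open>e \<subseteq> V\<close> by (simp add: sum.reindex subset_iff)
  qed
  then show ?thesis
    unfolding sombor_def using inj_on_image_edges[OF assms] by (simp add: sum.reindex)
qed

lemma graph_iso_imp_image:
  assumes "graph_iso V E W F" "simple_graph V E" "simple_graph W F"
  obtains f where "inj_on f V" "F = (`) f ` E"
proof -
  obtain f where bij: "bij_betw f V W"
    and adj: "\<forall>u\<in>V. \<forall>v\<in>V. {u, v} \<in> E \<longleftrightarrow> {f u, f v} \<in> F"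
    using assms(1) unfolding graph_iso_def by blast
  have surj: "f ` V = W" using bij by (simp add: bij_betw_def)
  have "F = (`) f ` E"
  proof (intro equalityI subsetI)
    fix e' assume e': "e' \<in> F"
    obtain x y where xy: "e' = {x, y}" "x \<noteq> y" "x \<in> W" "y \<in> W"
      by (rule simple_graph_edgeE[OF assms(3) e'])
    then obtain a b where ab: "a \<in> V" "b \<in> V" "x = f a" "y = f b" using surj by blast
    then have "{a, b} \<in> E" using adj e' xy(1) by blast
    moreover have "e' = f ` {a, b}" using ab xy(1) by simp
    ultimately show "e' \<in> (`) f ` E" by blast
  next
    fix e' assume "e' \<in> (`) f ` E"
    then obtain e where e: "e \<in> E" "e' = f ` e" by blast
    obtain a b where "e = {a, b}" "a \<noteq> b" "a \<in> V" "b \<in> V"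
      by (rule simple_graph_edgeE[OF assms(2) e(1)])
    then show "e' \<in> F" using adj e by simp
  qed
  then show thesis using that bij unfolding bij_betw_def by blast
qed

lemma sombor_graph_iso:
  assumes "graph_iso V E W F" "simple_graph V E" "simple_graph W F"
  shows "sombor E = sombor F"
proof -
  obtain f where "inj_on f V" "F = (`) f ` E" using graph_iso_imp_image[OF assms] .
  then show ?thesis using sombor_image assms(2) unfolding simple_graph_def by metis
qed

lemma graph_iso_image:
  assumes bij: "bij_betw \<phi> W V" and F: "\<forall>e\<in>F. e \<subseteq> W"
  shows "graph_iso V ((`) \<phi> ` F) W F"
  unfolding graph_iso_def
proof (intro exI conjI ballI)
  define f where "f = the_inv_into W \<phi>"
  show bij_f: "bij_betw f V W" unfolding f_def using bij by (rule bij_betw_the_inv_into)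
  have inj: "inj_on \<phi> W" using bij by (simp add: bij_betw_def)
  have f: "f x \<in> W" "\<phi> (f x) = x" if "x \<in> V" for x
    using that bij_f f_the_inv_into_f_bij_betw[OF bij] by (auto simp: f_def bij_betw_def)
  fix u v assume "u \<in> V" "v \<in> V"
  then have uv: "{u, v} = \<phi> ` {f u, f v}" "{f u, f v} \<subseteq> W" using f by auto
  show "{u, v} \<in> (`) \<phi> ` F \<longleftrightarrow> {f u, f v} \<in> F"
  proof
    assume "{u, v} \<in> (`) \<phi> ` F"
    then obtain e where "e \<in> F" "\<phi> ` e = \<phi> ` {f u, f v}" using uv(1) by auto
    then show "{f u, f v} \<in> F" using inj_on_image_eq_iff[OF inj _ uv(2), of e] F by simp
  qed (use uv(1) in blast)
next
  fix e assume "e \<in> (`) \<phi> ` F"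
  then show "e \<subseteq> V" using F bij by (auto simp: bij_betw_def)
qed

section \<open>Edge weights\<close>

lemma sqrt_8: "sqrt 8 = 2 * sqrt 2"
  using real_sqrt_mult[of 4 2] by (simp add: real_sqrt_unique)

lemma sqrt_add_sqrt_le:
  fixes p q r s :: real
  assumes "0 \<le> p" "0 \<le> q" "0 \<le> r" "0 \<le> s" "p + q = r + s" "p * q \<le> r * s"
  shows "sqrt p + sqrt q \<le> sqrt r + sqrt s"
proof (rule power2_le_imp_le)
  show "(sqrt p + sqrt q)\<^sup>2 \<le> (sqrt r + sqrt s)\<^sup>2"
    using assms by (simp add: power2_sum real_sqrt_mult[symmetric])
qed (use assms in simp)

lemma sqrt_add_sqrt_less:
  fixes p q r s :: real
  assumes "0 \<le> p" "0 \<le> q" "0 \<le> r" "0 \<le> s" "p + q = r + s" "p * q < r * s"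
  shows "sqrt p + sqrt q < sqrt r + sqrt s"
proof (rule power2_less_imp_less)
  show "(sqrt p + sqrt q)\<^sup>2 < (sqrt r + sqrt s)\<^sup>2"
    using assms by (simp add: power2_sum real_sqrt_mult[symmetric])
qed (use assms in simp)

lemma sqrt_split_le:
  fixes A B c :: real
  assumes "0 \<le> c" "c \<le> A" "c \<le> B"
  shows "sqrt (A + B) + sqrt (2 * c) \<le> sqrt (A + c) + sqrt (B + c)"
proof (rule sqrt_add_sqrt_le)
  have "0 \<le> (A - c) * (B - c)" using assms by simp
  then show "(A + B) * (2 * c) \<le> (A + c) * (B + c)" by (simp add: algebra_simps)
qed (use assms in auto)

lemma sqrt_rearrangement:
  fixes A Q a b :: real
  assumes "0 \<le> A + a" "A \<le> Q" "a \<le> b"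
  shows "sqrt (A + a) + sqrt (Q + b) \<le> sqrt (Q + a) + sqrt (A + b)"
    and "A < Q \<Longrightarrow> a < b \<Longrightarrow> sqrt (A + a) + sqrt (Q + b) < sqrt (Q + a) + sqrt (A + b)"
proof -
  have prod: "(Q + a) * (A + b) - (A + a) * (Q + b) = (Q - A) * (b - a)" by (simp add: algebra_simps)
  have "0 \<le> (Q - A) * (b - a)" using assms by simp
  then have "(A + a) * (Q + b) \<le> (Q + a) * (A + b)" using prod by linarith
  then show "sqrt (A + a) + sqrt (Q + b) \<le> sqrt (Q + a) + sqrt (A + b)"
    by (rule sqrt_add_sqrt_le[rotated 5]) (use assms in auto)
  assume "A < Q" "a < b"
  then have "0 < (Q - A) * (b - a)" by simp
  then have "(A + a) * (Q + b) < (Q + a) * (A + b)" using prod by linarith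
  then show "sqrt (A + a) + sqrt (Q + b) < sqrt (Q + a) + sqrt (A + b)"
    by (rule sqrt_add_sqrt_less[rotated 5]) (use assms in auto)
qed

definition leaf_weight :: "real \<Rightarrow> real" where
  "leaf_weight D = sqrt (D\<^sup>2 + 1) - sqrt (D\<^sup>2 + 4) + sqrt 2"

(* Chosen to make the edge bound exact on U_{n,g}, whose hub has degree D:
   w D + w 2 = sqrt (D\<^sup>2 + 4), w D + w 1 = sqrt (D\<^sup>2 + 1) and 2 * w 2 = sqrt 8. *)
definition vertex_weight :: "real \<Rightarrow> nat \<Rightarrow> real" where
  "vertex_weight D d = (if d = 1 then leaf_weight D else sqrt ((real d)\<^sup>2 + 4) - sqrt 2)"

lemma leaf_weight_gt:
  assumes "2 \<le> D"
  shows "sqrt 2 / 2 < leaf_weight D"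
proof -
  have Q: "4 \<le> D\<^sup>2" using power_mono[OF assms, of 2] by simp
  have "5 / 2 < sqrt (2 * D\<^sup>2 + 2)" using Q by (intro real_less_rsqrt) (simp add: power2_eq_square)
  also have "\<dots> = sqrt (D\<^sup>2 + 1) * sqrt 2" by (simp add: real_sqrt_mult[symmetric] algebra_simps)
  finally have "(2 * sqrt (D\<^sup>2 + 4))\<^sup>2 < (2 * sqrt (D\<^sup>2 + 1) + sqrt 2)\<^sup>2"
    using Q by (simp add: power2_sum power_mult_distrib algebra_simps)
  then have "2 * sqrt (D\<^sup>2 + 4) < 2 * sqrt (D\<^sup>2 + 1) + sqrt 2"
    by (rule power2_less_imp_less) simp
  then show ?thesis by (simp add: leaf_weight_def)
qed

lemma inner_edge_weight_le:
  assumes "2 \<le> a" "2 \<le> b"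
  shows "sqrt ((real a)\<^sup>2 + (real b)\<^sup>2) \<le> vertex_weight D a + vertex_weight D b"
proof -
  have "4 \<le> (real a)\<^sup>2" "4 \<le> (real b)\<^sup>2"
    using power_mono[of 2 "real a" 2] power_mono[of 2 "real b" 2] assms by simp_all
  then show ?thesis
    using sqrt_split_le[of 4 "(real a)\<^sup>2" "(real b)\<^sup>2"] assms by (simp add: vertex_weight_def sqrt_8)
qed

lemma leaf_edge_weight:
  assumes "1 \<le> b" "real b \<le> D" "2 \<le> D"
  shows "sqrt (1 + (real b)\<^sup>2) \<le> vertex_weight D 1 + vertex_weight D b"
    and "real b < D \<Longrightarrow> sqrt (1 + (real b)\<^sup>2) < vertex_weight D 1 + vertex_weight D b"
proof -
  have "sqrt (1 + (real b)\<^sup>2) \<le> vertex_weight D 1 + vertex_weight D b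
      \<and> (real b < D \<longrightarrow> sqrt (1 + (real b)\<^sup>2) < vertex_weight D 1 + vertex_weight D b)"
  proof (cases "b = 1")
    case True
    then show ?thesis using leaf_weight_gt[OF assms(3)] by (simp add: vertex_weight_def)
  next
    case False
    have "(real b)\<^sup>2 \<le> D\<^sup>2" using assms by (simp add: power_mono)
    moreover have "real b < D \<Longrightarrow> (real b)\<^sup>2 < D\<^sup>2" by (simp add: power_strict_mono)
    ultimately show ?thesis
      using sqrt_rearrangement[of "(real b)\<^sup>2" 1 "D\<^sup>2" 4] False
      by (auto simp: vertex_weight_def leaf_weight_def add.commute)
  qed
  then show "sqrt (1 + (real b)\<^sup>2) \<le> vertex_weight D 1 + vertex_weight D b"
    and "real b < D \<Longrightarrow> sqrt (1 + (real b)\<^sup>2) < vertex_weight D 1 + vertex_weight D b"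
    by auto
qed

lemma edge_weight_le:
  assumes "1 \<le> a" "1 \<le> b" "real a \<le> D" "real b \<le> D" "2 \<le> D"
  shows "sqrt ((real a)\<^sup>2 + (real b)\<^sup>2) \<le> vertex_weight D a + vertex_weight D b"
proof -
  consider "a = 1" | "b = 1" | "2 \<le> a" "2 \<le> b" using assms by linarith
  then show ?thesis
  proof cases
    case 1
    then show ?thesis using leaf_edge_weight(1)[OF assms(2,4,5)] by simp
  next
    case 2
    then show ?thesis using leaf_edge_weight(1)[OF assms(1,3,5)] by (simp add: add.commute)
  qed (rule inner_edge_weight_le)
qed

definition inner_weight :: "nat \<Rightarrow> real" where
  "inner_weight m = real m * (sqrt ((real m)\<^sup>2 + 4) - sqrt 2)"

lemma degree_times_vertex_weight: "d \<noteq> 1 \<Longrightarrow> real d * vertex_weight D d = inner_weight d"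
  by (simp add: vertex_weight_def inner_weight_def)

lemma sqrt_sq_add_4_plus_pos: "0 \<le> x \<Longrightarrow> 0 < sqrt (x\<^sup>2 + 4) + (x :: real)"
proof -
  have "0 < sqrt (x\<^sup>2 + 4)" by (simp add: add_nonneg_pos)
  then show "0 \<le> x \<Longrightarrow> 0 < sqrt (x\<^sup>2 + 4) + x" by linarith
qed

lemma sqrt_excess_eq:
  fixes x :: real
  assumes "0 \<le> x"
  shows "x * sqrt (x\<^sup>2 + 4) - x\<^sup>2 = 4 * x / (sqrt (x\<^sup>2 + 4) + x)"
proof -
  have "(x * sqrt (x\<^sup>2 + 4) - x\<^sup>2) * (sqrt (x\<^sup>2 + 4) + x) = x * ((sqrt (x\<^sup>2 + 4))\<^sup>2 - x\<^sup>2)"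
    by (simp add: algebra_simps power2_eq_square)
  also have "\<dots> = 4 * x" by simp
  finally show ?thesis using sqrt_sq_add_4_plus_pos[OF assms] by (simp add: field_simps)
qed

lemma sqrt_excess_mono:
  fixes x y :: real
  assumes "0 \<le> x" "x \<le> y"
  shows "x * sqrt (x\<^sup>2 + 4) - x\<^sup>2 \<le> y * sqrt (y\<^sup>2 + 4) - y\<^sup>2"
proof -
  have y: "0 \<le> y" using assms by simp
  have "x * sqrt (y\<^sup>2 + 4) = sqrt (x\<^sup>2 * (y\<^sup>2 + 4))" using assms(1) by (simp add: real_sqrt_mult)
  also have "\<dots> \<le> sqrt (y\<^sup>2 * (x\<^sup>2 + 4))"
    using power_mono[OF assms(2,1), of 2] by (simp add: algebra_simps)
  also have "\<dots> = y * sqrt (x\<^sup>2 + 4)" using y by (simp add: real_sqrt_mult)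
  finally have "4 * x * (sqrt (y\<^sup>2 + 4) + y) \<le> 4 * y * (sqrt (x\<^sup>2 + 4) + x)"
    by (simp add: algebra_simps)
  then have "4 * x / (sqrt (x\<^sup>2 + 4) + x) \<le> 4 * y / (sqrt (y\<^sup>2 + 4) + y)"
    using sqrt_sq_add_4_plus_pos[OF assms(1)] sqrt_sq_add_4_plus_pos[OF y] by (simp add: field_simps)
  then show ?thesis using sqrt_excess_eq assms(1) y by simp
qed

lemma sqrt_excess_bounds:
  fixes x :: real
  assumes "0 \<le> x"
  shows "0 \<le> x * sqrt (x\<^sup>2 + 4) - x\<^sup>2" "x * sqrt (x\<^sup>2 + 4) - x\<^sup>2 \<le> 2"
proof -
  have "x \<le> sqrt (x\<^sup>2 + 4)" by (rule real_le_rsqrt) simp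
  then show "0 \<le> x * sqrt (x\<^sup>2 + 4) - x\<^sup>2"
    using mult_left_mono[OF _ assms] by (fastforce simp: power2_eq_square)
  show "x * sqrt (x\<^sup>2 + 4) - x\<^sup>2 \<le> 2"
    using sqrt_excess_eq[OF assms] \<open>x \<le> sqrt (x\<^sup>2 + 4)\<close>
    by (simp add: pos_divide_le_eq[OF sqrt_sq_add_4_plus_pos[OF assms]])
qed

(* inner_weight m = g m + m\<^sup>2 - sqrt 2 * m with g x = x * sqrt (x\<^sup>2 + 4) - x\<^sup>2 increasing and
   bounded by 2, so the second difference is at least 2 - g (m + 1) \<ge> 0. *)
lemma inner_weight_convex:
  "inner_weight (Suc m) - inner_weight m \<le> inner_weight (Suc (Suc m)) - inner_weight (Suc m)"
proof -
  define g where "g x = x * sqrt (x\<^sup>2 + 4) - x\<^sup>2" for x :: real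
  have iw: "inner_weight k = g (real k) + (real k)\<^sup>2 - sqrt 2 * real k" for k
    by (simp add: inner_weight_def g_def algebra_simps)
  have "0 \<le> g (real m)" "g (real m + 1) \<le> 2" "g (real m + 1) \<le> g (real m + 2)"
    unfolding g_def using sqrt_excess_bounds[of "real m"] sqrt_excess_bounds[of "real m + 1"]
      sqrt_excess_mono[of "real m + 1" "real m + 2"] by simp_all
  then show ?thesis by (simp add: iw algebra_simps power2_eq_square)
qed

lemma convex_superadditive:
  fixes f :: "nat \<Rightarrow> real"
  assumes "incseq (\<lambda>m. f (Suc m) - f m)"
  shows "f a + f b \<le> f (a + b) + f 0"
proof (induction a)
  case (Suc a)
  have "f (Suc a) - f a \<le> f (Suc (a + b)) - f (a + b)" using incseqD[OF assms, of a "a + b"] by simp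
  then show ?case using Suc.IH by simp
qed simp

lemma convex_sum_le:
  fixes f :: "nat \<Rightarrow> real"
  assumes "incseq (\<lambda>m. f (Suc m) - f m)" "f 0 = 0"
  shows "(\<Sum>v\<in>N. f (x v)) \<le> f (\<Sum>v\<in>N. x v)"
proof (induction N rule: infinite_finite_induct)
  case (insert v N)
  then show ?case using convex_superadditive[OF assms(1), of "x v" "sum x N"] assms(2) by simp
qed (use assms(2) in simp_all)

lemma incseq_inner_weight_diff: "incseq (\<lambda>m. inner_weight (Suc m) - inner_weight m)"
  by (rule incseq_SucI) (rule inner_weight_convex)

lemma inner_weight_step_gt:
  assumes "2 \<le> m"
  shows "3 / 2 * sqrt 2 < inner_weight (Suc m) - inner_weight m"
proof -
  have "13 * sqrt 2 < 6 * sqrt 13" by (rule power2_less_imp_less) (simp_all add: power_mult_distrib)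
  then have "3 / 2 * sqrt 2 < inner_weight 3 - inner_weight 2"
    by (simp add: inner_weight_def sqrt_8 algebra_simps)
  also have "\<dots> \<le> inner_weight (Suc m) - inner_weight m"
    using incseqD[OF incseq_inner_weight_diff, of 2 m] assms by (simp add: numeral_3_eq_3)
  finally show ?thesis .
qed

definition inner_gain :: "nat \<Rightarrow> real" where
  "inner_gain a = inner_weight (a + 2) - inner_weight 2"

lemma inner_gain_sum_le: "(\<Sum>v\<in>N. inner_gain (x v)) \<le> inner_gain (\<Sum>v\<in>N. x v)"
proof (rule convex_sum_le)
  show "incseq (\<lambda>m. inner_gain (Suc m) - inner_gain m)"
    by (rule incseq_SucI) (use inner_weight_convex in \<open>simp add: inner_gain_def\<close>)
qed (simp add: inner_gain_def numeral_2_eq_2)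

lemma mono_inner_gain: "mono inner_gain"
proof (rule mono_iff_le_Suc[THEN iffD2], rule allI)
  fix a
  have "inner_weight (a + 2) \<le> inner_weight (Suc (a + 2))"
    using inner_weight_step_gt[of "a + 2"] real_sqrt_ge_zero[of 2] by linarith
  then show "inner_gain a \<le> inner_gain (Suc a)" by (simp add: inner_gain_def)
qed

definition pendant_gain :: "real \<Rightarrow> nat \<Rightarrow> real" where
  "pendant_gain D L = real L * (leaf_weight D - 2 * sqrt 2) + inner_gain L"

lemma strict_mono_pendant_gain:
  assumes "2 \<le> D"
  shows "strict_mono (pendant_gain D)"
proof (rule strict_mono_Suc_iff[THEN iffD2], rule allI)
  fix L
  show "pendant_gain D L < pendant_gain D (Suc L)"
    using leaf_weight_gt[OF assms] inner_weight_step_gt[of "L + 2"]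
    by (simp add: pendant_gain_def inner_gain_def algebra_simps)
qed

definition sombor_bound :: "nat \<Rightarrow> nat \<Rightarrow> real" where
  "sombor_bound n g = 2 * sqrt ((real n - real g + 2)\<^sup>2 + 4)
     + (real n - real g) * sqrt ((real n - real g + 2)\<^sup>2 + 1) + 2 * sqrt 2 * (real g - 2)"

lemma inner_weight_2: "inner_weight 2 = 2 * sqrt 2"
  by (simp add: inner_weight_def sqrt_8)

lemma sombor_bound_eq_pendant_gain:
  assumes "g \<le> n"
  shows "sombor_bound n g = real n * inner_weight 2 + pendant_gain (real (n - g) + 2) (n - g)"
  using assms
  by (simp add: sombor_bound_def pendant_gain_def inner_gain_def leaf_weight_def inner_weight_def
      sqrt_8 of_nat_diff algebra_simps)

section \<open>Cycles with pendant vertices\<close>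

definition pendant_cycle_edges :: "'a list \<Rightarrow> 'a \<Rightarrow> 'a set \<Rightarrow> 'a set set" where
  "pendant_cycle_edges vs h P = cycle_edges vs \<union> (\<lambda>l. {h, l}) ` P"

lemma U_edges_eq_pendant_cycle_edges: "U_edges n g = pendant_cycle_edges [0..<g] 0 {g..<n}"
proof -
  have "cycle_edges [0..<g] = (\<lambda>i. {i, (i + 1) mod g}) ` {..<g}"
    unfolding cycle_edges_conv_image length_upt diff_zero
  proof (rule image_cong[OF refl])
    fix i assume "i \<in> {..<g}"
    moreover have "(i + 1) mod g < g" using calculation by (intro mod_less_divisor) auto
    ultimately show "{[0..<g] ! i, [0..<g] ! ((i + 1) mod g)} = {i, (i + 1) mod g}" by simp
  qed
  moreover have "{{i, (i + 1) mod g} | i. i < g} = (\<lambda>i. {i, (i + 1) mod g}) ` {..<g}"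
    by (auto simp: image_def)
  moreover have "{{0, j} | j. g \<le> j \<and> j < n} = (\<lambda>j. {0, j}) ` {g..<n}"
    by (auto simp: image_def)
  ultimately show ?thesis unfolding U_edges_def pendant_cycle_edges_def by simp
qed

lemma pendant_cycle_edges_map:
  "(`) f ` pendant_cycle_edges vs h P = pendant_cycle_edges (map f vs) (f h) (f ` P)"
  unfolding pendant_cycle_edges_def image_Un cycle_edges_map image_image by simp

lemma degree_Un:
  assumes "finite A" "finite B" "A \<inter> B = {}"
  shows "degree (A \<union> B) v = degree A v + degree B v"
proof -
  have "{e \<in> A \<union> B. v \<in> e} = {e \<in> A. v \<in> e} \<union> {e \<in> B. v \<in> e}" by blast
  then show ?thesis unfolding degree_def using assms by (simp add: card_Un_disjoint disjoint_iff)
qed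

locale pendant_cycle =
  fixes vs :: "'a list" and h :: 'a and P :: "'a set"
  assumes cycle_distinct: "distinct vs" and cycle_length: "3 \<le> length vs"
    and hub_on_cycle: "h \<in> set vs" and finite_pendants: "finite P"
    and pendants_off_cycle: "P \<inter> set vs = {}"
begin

abbreviation edges where "edges \<equiv> pendant_cycle_edges vs h P"

lemma finite_cycle: "finite (cycle_edges vs)"
  by (simp add: cycle_edges_conv_image)

lemma inj_pendant: "inj_on (\<lambda>l. {h, l}) P"
  using hub_on_cycle pendants_off_cycle by (intro inj_onI) (auto simp: doubleton_eq_iff)

lemma cycle_pendant_disjoint: "cycle_edges vs \<inter> (\<lambda>l. {h, l}) ` P = {}"
  using cycle_edges_subset_set pendants_off_cycle by fastforce

lemma hub_notin: "l \<in> P \<Longrightarrow> h \<noteq> l"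
  using hub_on_cycle pendants_off_cycle by blast

lemma simple_graph_edges: "simple_graph (set vs \<union> P) edges"
  using simple_graph_cycle_edges[OF cycle_distinct cycle_length] hub_on_cycle finite_pendants hub_notin
  unfolding simple_graph_def pendant_cycle_edges_def by auto

lemma card_edges: "card edges = length vs + card P"
  unfolding pendant_cycle_edges_def
  using finite_cycle finite_pendants cycle_pendant_disjoint card_cycle_edges[OF cycle_distinct cycle_length]
  by (simp add: card_Un_disjoint card_image[OF inj_pendant])

lemma degree_edges:
  "degree edges v = degree (cycle_edges vs) v + degree ((\<lambda>l. {h, l}) ` P) v"
  unfolding pendant_cycle_edges_def
  using finite_cycle finite_pendants cycle_pendant_disjoint by (simp add: degree_Un)

lemma degree_hub: "degree edges h = card P + 2"
proof -
  have "{e \<in> (\<lambda>l. {h, l}) ` P. h \<in> e} = (\<lambda>l. {h, l}) ` P" by blast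
  then show ?thesis
    using degree_edges card_cycle_edges_containing[OF cycle_distinct cycle_length hub_on_cycle]
    by (simp add: degree_def card_image[OF inj_pendant])
qed

lemma degree_cycle: "v \<in> set vs \<Longrightarrow> v \<noteq> h \<Longrightarrow> degree edges v = 2"
proof -
  assume "v \<in> set vs" "v \<noteq> h"
  then have no_pendant: "{e \<in> (\<lambda>l. {h, l}) ` P. v \<in> e} = {}" using pendants_off_cycle by auto
  show ?thesis
    using degree_edges[of v] card_cycle_edges_containing[OF cycle_distinct cycle_length \<open>v \<in> set vs\<close>]
    unfolding degree_def no_pendant by simp
qed

lemma degree_pendant: "l \<in> P \<Longrightarrow> degree edges l = 1"
proof -
  assume l: "l \<in> P"
  have no_cycle: "{e \<in> cycle_edges vs. l \<in> e} = {}" using l pendants_off_cycle cycle_edges_subset_set by blast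
  have "{e \<in> (\<lambda>l. {h, l}) ` P. l \<in> e} = {{h, l}}" using l hub_notin by auto
  then show ?thesis using degree_edges[of l] unfolding degree_def no_cycle by simp
qed

lemma sum_cycle_terms:
  "(\<Sum>e\<in>cycle_edges vs. sombor_term edges e)
     = 2 * sqrt ((real (card P) + 2)\<^sup>2 + 4) + real (length vs - 2) * sqrt 8"
proof -
  define C where "C = cycle_edges vs"
  define Ch where "Ch = {e \<in> C. h \<in> e}"
  have simple_C: "simple_graph (set vs) C"
    unfolding C_def by (rule simple_graph_cycle_edges[OF cycle_distinct cycle_length])
  have "sombor_term edges e = sqrt ((real (card P) + 2)\<^sup>2 + 4)" if e: "e \<in> Ch" for e
  proof -
    obtain w where "e = {h, w}" "w \<noteq> h" "w \<in> set vs"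
      by (rule simple_graph_edge_at[OF simple_C]) (use e in \<open>auto simp: Ch_def\<close>)
    then show ?thesis using sombor_term_pair[of h w] degree_hub degree_cycle by simp
  qed
  then have "sum (sombor_term edges) Ch = 2 * sqrt ((real (card P) + 2)\<^sup>2 + 4)"
    using card_cycle_edges_containing[OF cycle_distinct cycle_length hub_on_cycle]
    by (simp add: Ch_def C_def)
  moreover have "sombor_term edges e = sqrt 8" if e: "e \<in> C - Ch" for e
  proof -
    obtain a b where "e = {a, b}" "a \<noteq> b" "a \<in> set vs" "b \<in> set vs"
      by (rule simple_graph_edgeE[OF simple_C]) (use e in blast)
    moreover have "a \<noteq> h" "b \<noteq> h" using e calculation(1) by (auto simp: Ch_def)
    ultimately show ?thesis using sombor_term_pair[of a b] degree_cycle by simp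
  qed
  then have "sum (sombor_term edges) (C - Ch) = real (length vs - 2) * sqrt 8"
    using card_cycle_edges_containing[OF cycle_distinct cycle_length hub_on_cycle]
      card_cycle_edges[OF cycle_distinct cycle_length] finite_cycle
    by (simp add: Ch_def C_def card_Diff_subset)
  moreover have "sum (sombor_term edges) C = sum (sombor_term edges) (C - Ch) + sum (sombor_term edges) Ch"
    by (rule sum.subset_diff) (auto simp: Ch_def C_def finite_cycle)
  ultimately show ?thesis by (simp add: C_def)
qed

lemma sum_pendant_terms:
  "(\<Sum>e\<in>(\<lambda>l. {h, l}) ` P. sombor_term edges e) = real (card P) * sqrt ((real (card P) + 2)\<^sup>2 + 1)"
proof -
  have "(\<Sum>e\<in>(\<lambda>l. {h, l}) ` P. sombor_term edges e) = (\<Sum>l\<in>P. sombor_term edges {h, l})"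
    by (simp add: sum.reindex[OF inj_pendant])
  also have "\<dots> = (\<Sum>l\<in>P. sqrt ((real (card P) + 2)\<^sup>2 + 1))"
  proof (rule sum.cong[OF refl])
    fix l assume "l \<in> P"
    then show "sombor_term edges {h, l} = sqrt ((real (card P) + 2)\<^sup>2 + 1)"
      using sombor_term_pair[OF hub_notin] degree_hub degree_pendant by simp
  qed
  finally show ?thesis by simp
qed

lemma sombor_edges: "sombor edges = sombor_bound (length vs + card P) (length vs)"
proof -
  have "sombor edges = (\<Sum>e\<in>cycle_edges vs. sombor_term edges e)
      + (\<Sum>e\<in>(\<lambda>l. {h, l}) ` P. sombor_term edges e)"
    unfolding sombor_eq_sum_terms pendant_cycle_edges_def
    using finite_cycle finite_pendants cycle_pendant_disjoint by (simp add: sum.union_disjoint)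
  then show ?thesis
    using sum_cycle_terms sum_pendant_terms cycle_length
    by (simp add: sombor_bound_def sqrt_8 algebra_simps of_nat_diff)
qed

end

lemma U_pendant_cycle:
  assumes "3 \<le> g" "g \<le> n"
  shows "pendant_cycle [0..<g] 0 {g..<n}"
  using assms by unfold_locales auto

lemma simple_graph_U:
  assumes "3 \<le> g" "g \<le> n"
  shows "simple_graph (U_vertices n) (U_edges n g)"
proof -
  interpret pendant_cycle "[0..<g]" 0 "{g..<n}" using U_pendant_cycle[OF assms] .
  have "set [0..<g] \<union> {g..<n} = U_vertices n" using assms by (auto simp: U_vertices_def)
  then show ?thesis using simple_graph_edges by (simp add: U_edges_eq_pendant_cycle_edges)
qed

context pendant_cycle
begin

lemma graph_iso_U:
  "graph_iso (set vs \<union> P) edges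
     (U_vertices (length vs + card P)) (U_edges (length vs + card P) (length vs))"
proof -
  define g where "g = length vs"
  define n where "n = g + card P"
  have g: "3 \<le> g" using cycle_length by (simp add: g_def)
  obtain j where j: "j < g" "vs ! j = h" using hub_on_cycle by (metis in_set_conv_nth g_def)
  define ws where "ws = rotate j vs"
  have ws: "length ws = g" "distinct ws" "set ws = set vs" "cycle_edges ws = cycle_edges vs"
    using cycle_distinct by (simp_all add: ws_def g_def cycle_edges_rotate)
  have "ws ! 0 = vs ! ((j + 0) mod length vs)"
    unfolding ws_def using cycle_length by (intro nth_rotate) (cases vs, auto)
  then have "ws ! 0 = h" using j by (simp add: g_def)
  obtain \<sigma> where \<sigma>: "bij_betw \<sigma> {g..<n} P"
    using finite_same_card_bij[of "{g..<n}" P] finite_pendants by (auto simp: n_def)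
  define \<phi> where "\<phi> i = (if i < g then ws ! i else \<sigma> i)" for i
  have "bij_betw ((!) ws) {..<g} (set vs)" using bij_betw_nth[OF ws(2)] ws(1,3) by simp
  then have "bij_betw \<phi> {..<g} (set vs)"
    by (rule bij_betw_cong[THEN iffD1, rotated]) (simp add: \<phi>_def)
  moreover have "bij_betw \<phi> {g..<n} P"
    using \<sigma> by (rule bij_betw_cong[THEN iffD1, rotated]) (simp add: \<phi>_def)
  ultimately have "bij_betw \<phi> ({..<g} \<union> {g..<n}) (set vs \<union> P)"
    using pendants_off_cycle by (intro bij_betw_combine) auto
  moreover have "{..<g} \<union> {g..<n} = {0..<n}" by (auto simp: n_def)
  ultimately have bij: "bij_betw \<phi> (U_vertices n) (set vs \<union> P)" by (simp add: U_vertices_def)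
  have "map \<phi> [0..<g] = ws" by (rule nth_equalityI) (simp_all add: \<phi>_def ws(1))
  moreover have "\<phi> 0 = h" using g \<open>ws ! 0 = h\<close> by (simp add: \<phi>_def)
  moreover have "\<phi> ` {g..<n} = P"
    using \<sigma> by (auto simp: \<phi>_def bij_betw_def)
  ultimately have "(`) \<phi> ` U_edges n g = edges"
    unfolding U_edges_eq_pendant_cycle_edges pendant_cycle_edges_map
    by (simp add: pendant_cycle_edges_def ws(4))
  moreover have "\<forall>e\<in>U_edges n g. e \<subseteq> U_vertices n"
    using simple_graph_U[OF g] by (simp add: simple_graph_def n_def)
  ultimately show ?thesis using graph_iso_image[OF bij, of "U_edges n g"] by (simp add: g_def n_def)
qed

end

lemma sombor_U:
  assumes "3 \<le> g" "g \<le> n"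
  shows "sombor (U_edges n g) = sombor_bound n g"
proof -
  interpret pendant_cycle "[0..<g]" 0 "{g..<n}" using U_pendant_cycle[OF assms] .
  show ?thesis using sombor_edges assms by (simp add: U_edges_eq_pendant_cycle_edges)
qed

section \<open>Unicyclic graphs\<close>

locale unicyclic_graph =
  fixes V :: "'a set" and E :: "'a set set"
  assumes unicyclic: "unicyclic V E"
begin

lemma simple: "simple_graph V E"
  using unicyclic by (simp add: unicyclic_def)

lemma finite_V: "finite V"
  using simple by (simp add: simple_graph_def)

lemma finite_E: "finite E"
  using simple by (rule simple_graph_finite_edges)

lemma cycle_exists: obtains vs where "is_cycle V E vs"
proof -
  obtain C where "cycles V E = {C}" using unicyclic by (auto simp: unicyclic_def)
  then show thesis using that unfolding cycles_def by blast
qed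

lemma cycle_edges_unique: "is_cycle V E vs \<Longrightarrow> is_cycle V E ws \<Longrightarrow> cycle_edges vs = cycle_edges ws"
  using unicyclic unfolding unicyclic_def cycles_def by blast

lemma length_cycle: "is_cycle V E vs \<Longrightarrow> length vs = girth V E"
proof -
  have length_eq: "length ws = length vs" if vs: "is_cycle V E vs" and ws: "is_cycle V E ws" for vs ws
  proof -
    have "length ws = card (cycle_edges ws)"
      using ws card_cycle_edges[of ws] by (simp add: is_cycle_def)
    also have "\<dots> = card (cycle_edges vs)" using cycle_edges_unique[OF vs ws] by simp
    also have "\<dots> = length vs" using vs card_cycle_edges[of vs] by (simp add: is_cycle_def)
    finally show ?thesis .
  qed
  assume vs: "is_cycle V E vs"
  show "length vs = girth V E" unfolding girth_def
  proof (rule Least_equality[symmetric])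
    show "\<exists>ws. is_cycle V E ws \<and> length ws = length vs" using vs by blast
    fix k assume "\<exists>ws. is_cycle V E ws \<and> length ws = k"
    then show "length vs \<le> k" using length_eq[OF vs] by auto
  qed
qed

lemma girth_ge_3: "3 \<le> girth V E"
proof -
  obtain vs where "is_cycle V E vs" by (rule cycle_exists)
  then show ?thesis using length_cycle[of vs] by (simp add: is_cycle_def)
qed

lemma card_cycle_vertices: "is_cycle V E vs \<Longrightarrow> card (set vs) = girth V E"
  using length_cycle[of vs] distinct_card[of vs] by (simp add: is_cycle_def)

lemma girth_le_card: "girth V E \<le> card V"
proof -
  obtain vs where vs: "is_cycle V E vs" by (rule cycle_exists)
  then have "card (set vs) \<le> card V" using finite_V by (intro card_mono) (auto simp: is_cycle_def)
  then show ?thesis using card_cycle_vertices[OF vs] by simp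
qed

lemma card_edges_le: "card E \<le> card V"
proof -
  obtain vs where vs: "is_cycle V E vs" by (rule cycle_exists)
  then have "cycle_edges vs \<noteq> {}" using card_cycle_edges[of vs] by (auto simp: is_cycle_def)
  then obtain e where e: "e \<in> cycle_edges vs" by blast
  then have "e \<in> E" using vs by (auto simp: is_cycle_def)
  have "\<nexists>ws. is_cycle V (E - {e}) ws"
  proof
    assume "\<exists>ws. is_cycle V (E - {e}) ws"
    then obtain ws where ws: "is_cycle V (E - {e}) ws" by blast
    then have "is_cycle V E ws" by (auto simp: is_cycle_def)
    then have "e \<in> cycle_edges ws" using cycle_edges_unique[OF vs] e by simp
    then show False using ws by (auto simp: is_cycle_def)
  qed
  moreover have "simple_graph V (E - {e})" using simple by (simp add: simple_graph_def)
  moreover have "V \<noteq> {}" using vs by (auto simp: is_cycle_def)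
  ultimately have "card (E - {e}) < card V" by (intro acyclic_card_edges_less)
  then show ?thesis using \<open>e \<in> E\<close> finite_E by simp
qed

lemma degree_pos: "v \<in> V \<Longrightarrow> 1 \<le> degree E v"
proof -
  assume v: "v \<in> V"
  obtain vs where vs: "is_cycle V E vs" by (rule cycle_exists)
  have "\<not> set vs \<subseteq> {v}"
  proof
    assume "set vs \<subseteq> {v}"
    then have "card (set vs) \<le> 1" using card_mono[of "{v}" "set vs"] by simp
    then show False using card_cycle_vertices[OF vs] girth_ge_3 by simp
  qed
  then obtain u where "u \<in> V" "u \<noteq> v" using vs by (auto simp: is_cycle_def)
  then show ?thesis
    using connected_degree_pos[OF _ finite_E] unicyclic v by (auto simp: unicyclic_def)
qed

definition leaves :: "'a set" where
  "leaves = {v \<in> V. degree E v = 1}"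

definition max_degree :: nat where
  "max_degree = card V - girth V E + 2"

definition weight_sum :: real where
  "weight_sum = (\<Sum>v\<in>V. real (degree E v) * vertex_weight (real max_degree) (degree E v))"

lemma finite_leaves: "finite leaves"
  using finite_V by (simp add: leaves_def)

lemma degree_ge_2: "v \<in> V - leaves \<Longrightarrow> 2 \<le> degree E v"
  using degree_pos[of v] by (auto simp: leaves_def)

lemma leaves_disjoint_cycle: "is_cycle V E vs \<Longrightarrow> leaves \<inter> set vs = {}"
  using is_cycle_degree_ge_2[OF _ finite_E] by (fastforce simp: leaves_def)

lemma card_leaves_le: "card leaves \<le> card V - girth V E"
proof -
  obtain vs where vs: "is_cycle V E vs" by (rule cycle_exists)
  then have "leaves \<subseteq> V - set vs" using leaves_disjoint_cycle by (auto simp: leaves_def)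
  then have "card leaves \<le> card (V - set vs)" using finite_V by (intro card_mono) auto
  also have "\<dots> = card V - girth V E"
    using vs finite_V card_cycle_vertices by (simp add: card_Diff_subset is_cycle_def)
  finally show ?thesis .
qed

lemma excess_sum_le: "(\<Sum>v\<in>V - leaves. degree E v - 2) \<le> card leaves"
proof -
  have "(\<Sum>v\<in>V - leaves. degree E v) = (\<Sum>v\<in>V - leaves. (degree E v - 2) + 2)"
  proof (rule sum.cong[OF refl])
    fix v assume "v \<in> V - leaves"
    then have "2 \<le> degree E v" by (rule degree_ge_2)
    then show "degree E v = degree E v - 2 + 2" by simp
  qed
  then have "(\<Sum>v\<in>V - leaves. degree E v) = (\<Sum>v\<in>V - leaves. degree E v - 2) + 2 * card (V - leaves)"
    by (simp only: sum.distrib) simp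
  moreover have "(\<Sum>v\<in>V. degree E v) = card leaves + (\<Sum>v\<in>V - leaves. degree E v)"
    using finite_V sum.subset_diff[of leaves V "degree E"] by (simp add: leaves_def)
  moreover have "(\<Sum>v\<in>V. degree E v) \<le> 2 * card V" using handshake[OF simple] card_edges_le by simp
  moreover have "card (V - leaves) = card V - card leaves"
    using finite_V by (simp add: card_Diff_subset leaves_def)
  moreover have "card leaves \<le> card V" using finite_V by (simp add: card_mono leaves_def)
  ultimately show ?thesis by linarith
qed

lemma degree_le_max_degree: "v \<in> V \<Longrightarrow> degree E v \<le> max_degree"
proof (cases "v \<in> leaves")
  case False
  assume "v \<in> V"
  then have "degree E v - 2 \<le> (\<Sum>v\<in>V - leaves. degree E v - 2)"
    using False finite_V by (intro member_le_sum) auto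
  then show ?thesis using excess_sum_le card_leaves_le by (simp add: max_degree_def)
qed (simp add: leaves_def max_degree_def)

lemma two_le_max_degree: "2 \<le> real max_degree"
  by (simp add: max_degree_def)

lemma sombor_term_le:
  assumes "e \<in> E"
  shows "sombor_term E e \<le> (\<Sum>v\<in>e. vertex_weight (real max_degree) (degree E v))"
proof -
  obtain a b where "e = {a, b}" "a \<noteq> b" "a \<in> V" "b \<in> V" by (rule simple_graph_edgeE[OF simple assms])
  then show ?thesis
    using edge_weight_le[OF degree_pos degree_pos _ _ two_le_max_degree] degree_le_max_degree
    by (simp add: sombor_term_pair)
qed

lemma edge_sum_eq_weight_sum:
  "(\<Sum>e\<in>E. \<Sum>v\<in>e. vertex_weight (real max_degree) (degree E v)) = weight_sum"
  unfolding weight_sum_def using finite_V simple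
  by (intro edge_sum_eq_degree_sum) (auto simp: simple_graph_def)

lemma sombor_le_weight_sum: "sombor E \<le> weight_sum"
  unfolding sombor_eq_sum_terms edge_sum_eq_weight_sum[symmetric] by (intro sum_mono sombor_term_le)

lemma sombor_eq_weight_sum_imp_term_eq:
  assumes "sombor E = weight_sum"
    and "e \<in> E"
  shows "sombor_term E e = (\<Sum>v\<in>e. vertex_weight (real max_degree) (degree E v))"
  using assms(1) unfolding sombor_eq_sum_terms edge_sum_eq_weight_sum[symmetric]
  by (rule sum_mono_inv) (use sombor_term_le assms(2) finite_E in auto)

lemma weight_sum_le:
  "weight_sum \<le> real (card V) * inner_weight 2 + pendant_gain (real max_degree) (card leaves)"
proof -
  define w where "w v = real (degree E v) * vertex_weight (real max_degree) (degree E v)" for v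
  have "sum w leaves = real (card leaves) * leaf_weight (real max_degree)"
    by (simp add: w_def leaves_def vertex_weight_def)
  moreover have "w v = inner_weight 2 + inner_gain (degree E v - 2)" if v: "v \<in> V - leaves" for v
  proof -
    obtain m where m: "degree E v = m + 2" using degree_ge_2[OF v] by (metis le_add_diff_inverse2)
    then show ?thesis using degree_times_vertex_weight[of "degree E v"] by (simp add: w_def inner_gain_def)
  qed
  then have "sum w (V - leaves)
      = real (card (V - leaves)) * inner_weight 2 + (\<Sum>v\<in>V - leaves. inner_gain (degree E v - 2))"
    by (simp add: sum.distrib)
  moreover have "(\<Sum>v\<in>V - leaves. inner_gain (degree E v - 2)) \<le> inner_gain (card leaves)"
    using inner_gain_sum_le monoD[OF mono_inner_gain excess_sum_le] by (rule order_trans)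
  moreover have "sum w V = sum w leaves + sum w (V - leaves)"
    using finite_V sum.subset_diff[of leaves V w] by (simp add: leaves_def)
  moreover have "real (card (V - leaves)) = real (card V) - real (card leaves)"
    using finite_V by (simp add: card_Diff_subset card_mono leaves_def of_nat_diff)
  ultimately show ?thesis
    unfolding weight_sum_def w_def[symmetric] by (simp add: pendant_gain_def inner_weight_2 algebra_simps)
qed

theorem sombor_le: "sombor E \<le> sombor_bound (card V) (girth V E)"
proof -
  have "pendant_gain (real max_degree) (card leaves)
      \<le> pendant_gain (real max_degree) (card V - girth V E)"
    using strict_mono_less_eq[OF strict_mono_pendant_gain[OF two_le_max_degree]] card_leaves_le
    by simp
  moreover have D: "real (card V - girth V E) + 2 = real max_degree" by (simp add: max_degree_def)
  ultimately show ?thesis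
    using sombor_le_weight_sum weight_sum_le sombor_bound_eq_pendant_gain[OF girth_le_card]
    unfolding D by linarith
qed

lemma sombor_eq_bound_imp:
  assumes "sombor E = sombor_bound (card V) (girth V E)"
  shows "sombor E = weight_sum"
    and "card leaves = card V - girth V E"
proof -
  have mono: "strict_mono (pendant_gain (real max_degree))"
    by (rule strict_mono_pendant_gain[OF two_le_max_degree])
  have le: "pendant_gain (real max_degree) (card leaves)
      \<le> pendant_gain (real max_degree) (card V - girth V E)"
    using strict_mono_less_eq[OF mono] card_leaves_le by simp
  have D: "real (card V - girth V E) + 2 = real max_degree" by (simp add: max_degree_def)
  note chain = le sombor_le_weight_sum weight_sum_le assms
    sombor_bound_eq_pendant_gain[OF girth_le_card, unfolded D]
  show "sombor E = weight_sum"
    using chain by linarith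
  have "pendant_gain (real max_degree) (card leaves)
      = pendant_gain (real max_degree) (card V - girth V E)"
    using chain by linarith
  then show "card leaves = card V - girth V E" using strict_mono_eq[OF mono] by blast
qed

lemma leaf_edge:
  assumes "l \<in> leaves"
  obtains y where "{l, y} \<in> E"
proof -
  have "card {e \<in> E. l \<in> e} = 1" using assms by (simp add: leaves_def degree_def)
  then obtain e where "{e \<in> E. l \<in> e} = {e}" by (rule card_1_singletonE)
  then have "e \<in> E" "l \<in> e" by auto
  then show thesis using that simple_graph_edge_at[OF simple] by metis
qed

lemma leaf_neighbour_max_degree:
  assumes "sombor E = weight_sum"
    and "l \<in> leaves" "{l, y} \<in> E"
  shows "degree E y = max_degree"
proof (rule ccontr)
  have "l \<noteq> y" "y \<in> V" using simple assms(3) by (auto simp: simple_graph_def)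
  moreover assume "degree E y \<noteq> max_degree"
  ultimately have "real (degree E y) < real max_degree" using degree_le_max_degree by fastforce
  then have "sqrt (1 + (real (degree E y))\<^sup>2)
      < vertex_weight (real max_degree) 1 + vertex_weight (real max_degree) (degree E y)"
    using leaf_edge_weight(2)[OF degree_pos[OF \<open>y \<in> V\<close>] _ two_le_max_degree] by simp
  moreover have "sqrt (1 + (real (degree E y))\<^sup>2)
      = vertex_weight (real max_degree) 1 + vertex_weight (real max_degree) (degree E y)"
    using sombor_eq_weight_sum_imp_term_eq[OF assms(1,3)] \<open>l \<noteq> y\<close> assms(2)
    by (simp add: leaves_def sombor_term_pair)
  ultimately show False by simp
qed

lemma max_degree_vertex_unique:
  assumes "1 \<le> card V - girth V E" "degree E u = max_degree" "degree E w = max_degree"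
    and "u \<in> V" "w \<in> V"
  shows "u = w"
proof (rule ccontr)
  assume "u \<noteq> w"
  have "{u, w} \<subseteq> V - leaves" using assms by (auto simp: leaves_def max_degree_def)
  then have "(\<Sum>v\<in>{u, w}. degree E v - 2) \<le> (\<Sum>v\<in>V - leaves. degree E v - 2)"
    using finite_V by (intro sum_mono2) auto
  then have "2 * (card V - girth V E) \<le> card leaves"
    using excess_sum_le \<open>u \<noteq> w\<close> assms(2,3) by (simp add: max_degree_def)
  then show False using card_leaves_le assms(1) by linarith
qed

lemma leaves_attached_to_hub:
  assumes tight: "sombor E = weight_sum"
    and "leaves \<noteq> {}"
  obtains h where "h \<in> V - leaves" "\<And>l. l \<in> leaves \<Longrightarrow> {h, l} \<in> E"
proof -
  obtain l0 where l0: "l0 \<in> leaves" using assms(2) by blast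
  obtain h where h: "{l0, h} \<in> E" using leaf_edge[OF l0] .
  have "h \<in> V" using simple h by (auto simp: simple_graph_def)
  have deg_h: "degree E h = max_degree" by (rule leaf_neighbour_max_degree[OF tight l0 h])
  then have "h \<notin> leaves" by (simp add: leaves_def max_degree_def)
  have "0 < card leaves" using assms(2) finite_leaves by (simp add: card_gt_0_iff)
  then have k: "1 \<le> card V - girth V E" using card_leaves_le by simp
  show thesis
  proof (rule that)
    show "h \<in> V - leaves" using \<open>h \<in> V\<close> \<open>h \<notin> leaves\<close> by blast
    fix l assume l: "l \<in> leaves"
    obtain y where y: "{l, y} \<in> E" using leaf_edge[OF l] .
    have "y \<in> V" using simple y by (auto simp: simple_graph_def)
    then have "y = h"
      using max_degree_vertex_unique[OF k leaf_neighbour_max_degree[OF tight l y] deg_h] \<open>h \<in> V\<close>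
      by blast
    then show "{h, l} \<in> E" using y by (simp add: insert_commute)
  qed
qed

theorem sombor_eq_imp_pendant_cycle:
  assumes "sombor E = sombor_bound (card V) (girth V E)"
  obtains vs h where "is_cycle V E vs" "h \<in> set vs" "E = pendant_cycle_edges vs h (V - set vs)"
proof -
  obtain vs where vs: "is_cycle V E vs" by (rule cycle_exists)
  have tight: "sombor E = weight_sum"
    and card_L: "card leaves = card V - girth V E"
    using sombor_eq_bound_imp[OF assms] by auto
  have "leaves \<subseteq> V - set vs" using leaves_disjoint_cycle[OF vs] by (auto simp: leaves_def)
  moreover have "card (V - set vs) = card V - girth V E"
    using vs finite_V card_cycle_vertices by (simp add: card_Diff_subset is_cycle_def)
  ultimately have leaves_eq: "leaves = V - set vs"
    using finite_V card_L by (intro card_subset_eq) auto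
  obtain h where h: "h \<in> set vs" and adjacent: "\<And>l. l \<in> leaves \<Longrightarrow> {h, l} \<in> E"
  proof (cases "leaves = {}")
    case True
    have "vs \<noteq> []" using vs by (auto simp: is_cycle_def)
    then show thesis using that[of "hd vs"] True by simp
  next
    case False
    obtain h where "h \<in> V - leaves" "\<And>l. l \<in> leaves \<Longrightarrow> {h, l} \<in> E"
      using leaves_attached_to_hub[OF tight False] by blast
    moreover have "V - leaves = set vs" using leaves_eq vs by (auto simp: is_cycle_def)
    ultimately show thesis using that by blast
  qed
  interpret pendant_cycle vs h leaves
    using vs h finite_leaves leaves_eq by unfold_locales (auto simp: is_cycle_def)
  have "edges \<subseteq> E" using vs adjacent by (auto simp: pendant_cycle_edges_def is_cycle_def)
  moreover have "card E \<le> card edges"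
    using card_edges card_L card_edges_le girth_le_card length_cycle[OF vs] by simp
  ultimately have "edges = E" using finite_E by (intro card_seteq)
  then show thesis using that[OF vs h] leaves_eq by simp
qed

theorem sombor_eq_iff_graph_iso_U:
  "sombor E = sombor_bound (card V) (girth V E)
     \<longleftrightarrow> graph_iso V E (U_vertices (card V)) (U_edges (card V) (girth V E))"
proof
  assume "sombor E = sombor_bound (card V) (girth V E)"
  then obtain vs h where vs: "is_cycle V E vs" and "h \<in> set vs"
    and E: "E = pendant_cycle_edges vs h (V - set vs)"
    by (rule sombor_eq_imp_pendant_cycle)
  interpret pendant_cycle vs h "V - set vs"
    using vs \<open>h \<in> set vs\<close> finite_V by unfold_locales (auto simp: is_cycle_def)
  have "set vs \<union> (V - set vs) = V" "length vs = girth V E"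
    "length vs + card (V - set vs) = card V"
    using vs finite_V length_cycle[OF vs] card_cycle_vertices[OF vs] girth_le_card
    by (auto simp: is_cycle_def card_Diff_subset)
  then show "graph_iso V E (U_vertices (card V)) (U_edges (card V) (girth V E))"
    using graph_iso_U E by simp
next
  assume "graph_iso V E (U_vertices (card V)) (U_edges (card V) (girth V E))"
  then show "sombor E = sombor_bound (card V) (girth V E)"
    using sombor_graph_iso[OF _ simple simple_graph_U[OF girth_ge_3 girth_le_card]]
      sombor_U[OF girth_ge_3 girth_le_card] by simp
qed

end

theorem theorem3p4:
  fixes V :: "'a set" and E :: "'a set set" and n g :: nat
  assumes "unicyclic V E" and "card V = n" and "girth V E = g"
  shows "sombor E \<le> 2 * sqrt ((real n - real g + 2)\<^sup>2 + 4)
                     + (real n - real g) * sqrt ((real n - real g + 2)\<^sup>2 + 1)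
                     + 2 * sqrt 2 * (real g - 2)
       \<and> (sombor E = 2 * sqrt ((real n - real g + 2)\<^sup>2 + 4)
                     + (real n - real g) * sqrt ((real n - real g + 2)\<^sup>2 + 1)
                     + 2 * sqrt 2 * (real g - 2)
          \<longleftrightarrow> graph_iso V E (U_vertices n) (U_edges n g))"
proof -
  interpret unicyclic_graph V E by (rule unicyclic_graph.intro) (rule assms(1))
  show ?thesis using sombor_le sombor_eq_iff_graph_iso_U assms(2,3) unfolding sombor_bound_def by simp
qed

end
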